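(* Assume Hypothesis 1.2 (in addition to the standing noise hypotheses). Let $\phi\in V\cap H^2(\mathcal O)$ and $\eta>0$, and define the $H$-valued random variables $x^*_{0,\epsilon}(\theta_t\omega)=\epsilon\int_{-\infty}^te^{-\eta(t-s)}\phi\,dW_s$ and $x^*_{\delta,\epsilon}(\theta_t\omega)=\epsilon\int_{-\infty}^te^{-\eta(t-s)}\phi\,\zeta_\delta(\theta_s\omega)ds$. Then for almost all $\omega\in\Omega$ and all $t\le0$, $$\lim_{\delta\to0^+,\ \epsilon\to0^+}|x^*_{\delta,\epsilon}(\theta_t\omega)-x^*_{0,\epsilon}(\theta_t\omega)|=0\quad\text{and}\quad\lim_{\epsilon\to0^+}|x^*_{0,\epsilon}(\theta_t\omega)|=0.$$
   Context: $\mathcal O\subset\mathbb R^N$ bounded open of class $C^k$, $k\ge2$; $H=L^2(\mathcal O)$ with norm $|\cdot|$; $V=H_0^1(\mathcal O)$. $\Omega$: continuous $\omega:\mathbb R\to\mathbb R$ with $\omega(0)=0$, $\omega(t)/t\to0$ at $\pm\infty$, Wiener measure; $W_t(\omega)=\omega(t)$; $\theta_t\omega(\cdot)=\omega(t+\cdot)-\omega(t)$; $C_\omega=\sup_{s\in\mathbb Q}|\omega(s)|/(|s|+1)$. Standing noise hypotheses: for each $\delta>0$, $\zeta_\delta:\Omega\to\mathbb R$ measurable with $t\mapsto\zeta_\delta(\theta_t\omega)$ stationary continuous, $|\zeta_\delta(\theta_t\omega)|\le K_\delta C_\omega(|t|+1)$ ($K_\delta\to\infty$ as $\delta\to0^+$),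 $\sup_{|t|\le T}|\int_0^t\zeta_\delta(\theta_r\omega)dr-\omega(t)|\to0$ as $\delta\to0^+$ for every $T>0$; and (Hypothesis 1.2) there is $\tilde\delta>0$ such that $\lim_{t\to\pm\infty}\frac1t[\int_0^t\zeta_\delta(\theta_s\omega)ds-\omega(t)]=0$ uniformly in $\delta\in(0,\tilde\delta]$. *)

theory Defs
  imports "HOL-Analysis.Analysis"
begin

text \<open>Canonical sample space: continuous paths, vanishing at 0, sublinear at infinity.\<close>
definition Omega :: "(real \<Rightarrow> real) set" where
  "Omega = {w. continuous_on UNIV w \<and> w 0 = 0 \<and>
              ((\<lambda>t. w t / t) \<longlongrightarrow> 0) at_top \<and> ((\<lambda>t. w t / t) \<longlongrightarrow> 0) at_bot}"

definition theta :: "real \<Rightarrow> (real \<Rightarrow> real) \<Rightarrow> (real \<Rightarrow> real)" where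
  "theta t w = (\<lambda>s. w (t + s) - w t)"

definition C_omega :: "(real \<Rightarrow> real) \<Rightarrow> real" where
  "C_omega w = (SUP s\<in>\<rat>. \<bar>w s\<bar> / (\<bar>s\<bar> + 1))"

definition in_L2 :: "('n::euclidean_space) set \<Rightarrow> ('n \<Rightarrow> real) \<Rightarrow> bool" where
  "in_L2 D f \<longleftrightarrow> f \<in> borel_measurable (lebesgue_on D) \<and> integrable (lebesgue_on D) (\<lambda>x. (f x)^2)"

definition L2norm :: "('n::euclidean_space) set \<Rightarrow> ('n \<Rightarrow> real) \<Rightarrow> real" where
  "L2norm D f = sqrt (\<integral>x. (f x)^2 \<partial>lebesgue_on D)"

text \<open>Pathwise Wiener integral  int_{-infty}^t e^{-eta(t-s)} dw(s), defined by
  integration by parts:  w t - eta * int_{-infty}^t e^{-eta(t-s)} w(s) ds.\<close>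
definition wiener_exp_int :: "real \<Rightarrow> (real \<Rightarrow> real) \<Rightarrow> real \<Rightarrow> real" where
  "wiener_exp_int \<eta> w t = w t - \<eta> * (\<integral>s\<in>{..t}. exp (- \<eta> * (t - s)) * w s \<partial>lborel)"

text \<open>x^*_{0,eps}(theta_t w) = eps int_{-infty}^t e^{-eta(t-s)} phi dW_s\<close>
definition x0 :: "real \<Rightarrow> ('n \<Rightarrow> real) \<Rightarrow> real \<Rightarrow> (real \<Rightarrow> real) \<Rightarrow> real \<Rightarrow> ('n \<Rightarrow> real)" where
  "x0 \<eta> \<phi> \<epsilon> w t = (\<lambda>x. \<epsilon> * wiener_exp_int \<eta> w t * \<phi> x)"

text \<open>x^*_{delta,eps}(theta_t w) = eps int_{-infty}^t e^{-eta(t-s)} phi zeta_delta(theta_s w) ds\<close>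
definition xdelta :: "real \<Rightarrow> ('n \<Rightarrow> real) \<Rightarrow> (real \<Rightarrow> (real \<Rightarrow> real) \<Rightarrow> real) \<Rightarrow> real \<Rightarrow> real
    \<Rightarrow> (real \<Rightarrow> real) \<Rightarrow> real \<Rightarrow> ('n \<Rightarrow> real)" where
  "xdelta \<eta> \<phi> \<zeta> \<delta> \<epsilon> w t =
     (\<lambda>x. \<epsilon> * (\<integral>s\<in>{..t}. exp (- \<eta> * (t - s)) * \<zeta> \<delta> (theta s w) \<partial>lborel) * \<phi> x)"

end

theory Submission
  imports Defs "HOL-Real_Asymp.Real_Asymp"
begin

text \<open>Put Z_delta(s) = int_0^s zeta_delta(theta_r w) dr. Integration by parts turns
  int_{-infty}^t e^{-eta(t-s)} zeta_delta(theta_s w) ds into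
  Z_delta(t) - eta int_{-infty}^t e^{-eta(t-s)} Z_delta(s) ds, which is the pathwise Wiener integral
  with Z_delta in place of w. The difference of the two scalar integrals is therefore controlled
  by Z_delta - w. Uniform convergence on compacts together with Hypothesis 1.2 gives
  |Z_delta(s) - w(s)| <= e (1 - s) for all s <= 0 once delta is small, and the exponential weight
  integrates such linear bounds. Both processes are scalar multiples of phi, so their H-norms are
  |eps| times a scalar times |phi|.\<close>

lemma set_integral_atMost_eq_lessThan:
  fixes f :: "real \<Rightarrow> real"
  assumes "continuous_on UNIV f"
  shows "(LINT x:{..t}|lborel. f x) = (LINT x:{..<t}|lborel. f x)"
proof (rule set_integral_cong_set)
  show "set_borel_measurable lborel {..<t} f" "set_borel_measurable lborel {..t} f"
    unfolding set_borel_measurable_def measurable_lborel2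
    by (rule borel_measurable_continuous_on_indicator; auto intro: continuous_on_subset[OF assms])+
  show "AE x in lborel. (x \<in> {..<t}) = (x \<in> {..t})"
    using AE_lborel_singleton[of t] by eventually_elim auto
qed

lemma LBINT_0_has_field_derivative:
  fixes z :: "real \<Rightarrow> real"
  assumes "continuous_on UNIV z"
  shows "((\<lambda>u. LBINT r=0..u. z r) has_field_derivative z x) (at x)"
proof -
  have "((\<lambda>u. LBINT r=0..u. z r) has_vector_derivative z x) (at x within {-\<bar>x\<bar>-1..\<bar>x\<bar>+1})"
    using interval_integral_FTC2[of "-\<bar>x\<bar>-1" 0 "\<bar>x\<bar>+1" z x] continuous_on_subset[OF assms]
    by (simp add: zero_ereal_def)
  moreover have "at x within {-\<bar>x\<bar>-1..\<bar>x\<bar>+1} = at x"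
    by (rule at_within_Icc_at) auto
  ultimately show ?thesis
    by (simp add: has_real_derivative_iff_has_vector_derivative)
qed

lemma continuous_on_LBINT_0:
  fixes z :: "real \<Rightarrow> real"
  assumes "continuous_on UNIV z"
  shows "continuous_on UNIV (\<lambda>u::real. LBINT r=0..u. z r)"
  using LBINT_0_has_field_derivative[OF assms] DERIV_isCont continuous_at_imp_continuous_on by blast

lemma sublinear_at_bot_imp_linear_bound:
  fixes g :: "real \<Rightarrow> real"
  assumes g: "continuous_on UNIV g" and sublinear: "((\<lambda>s. g s / s) \<longlongrightarrow> 0) at_bot"
  obtains A where "\<And>s. s \<le> 0 \<Longrightarrow> \<bar>g s\<bar> \<le> A * (1 - s)"
proof -
  obtain T where T: "\<And>s. s \<le> T \<Longrightarrow> \<bar>g s / s\<bar> < 1"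
    using order_tendstoD(2)[OF tendsto_rabs[OF sublinear], of 1]
    unfolding eventually_at_bot_linorder by auto
  define T' where "T' = min T (-1)"
  have tail: "\<bar>g s\<bar> \<le> 1 - s" if "s \<le> T'" for s
  proof -
    have "s < 0" "s \<le> T" using that by (auto simp: T'_def)
    then have "\<bar>g s\<bar> = \<bar>g s / s\<bar> * \<bar>s\<bar>" by simp
    also have "\<dots> < 1 * \<bar>s\<bar>"
      using \<open>s < 0\<close> by (intro mult_strict_right_mono[OF T[OF \<open>s \<le> T\<close>]]) simp
    finally show ?thesis using \<open>s < 0\<close> by simp
  qed
  have "compact (g ` {T'..0})"
    by (intro compact_continuous_image continuous_on_subset[OF g]) auto
  then obtain M where M: "\<And>s. s \<in> {T'..0} \<Longrightarrow> \<bar>g s\<bar> \<le> M"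
    using compact_imp_bounded bounded_real by (metis image_eqI)
  have "\<bar>g s\<bar> \<le> max 1 M * (1 - s)" if "s \<le> 0" for s
  proof (cases "s \<le> T'")
    case True
    have "1 * (1 - s) \<le> max 1 M * (1 - s)" using that by (intro mult_right_mono) auto
    then show ?thesis using tail[OF True] by simp
  next
    case False
    then have "\<bar>g s\<bar> \<le> M" using M that by auto
    also have "\<dots> \<le> max 1 M * 1" by simp
    also have "\<dots> \<le> max 1 M * (1 - s)" using that by (intro mult_left_mono) auto
    finally show ?thesis .
  qed
  then show ?thesis using that by blast
qed

lemma exp_weight_linear_integrable:
  fixes \<eta> t :: real
  assumes eta: "\<eta> > 0" and t: "t \<le> 0"
  shows "set_integrable lborel {..<t} (\<lambda>s. exp (-\<eta>*(t-s)) * (1 - s))"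
proof -
  define F where "F s = exp (-\<eta>*(t-s)) * ((1 + 1/\<eta>)/\<eta> - s/\<eta>)" for s
  have "set_integrable lborel (einterval (-\<infinity>) (ereal t)) (\<lambda>s. exp (-\<eta>*(t-s)) * (1 - s))"
  proof (rule interval_integral_FTC_nonneg(1))
    fix x
    show "DERIV F x :> exp (-\<eta>*(t-x)) * (1 - x)"
      unfolding F_def using eta by (auto intro!: derivative_eq_intros simp: field_simps)
    show "isCont (\<lambda>s. exp (-\<eta>*(t-s)) * (1 - s)) x"
      by (intro continuous_intros)
  next
    show "AE x in lborel. - \<infinity> < ereal x \<longrightarrow> ereal x < ereal t \<longrightarrow> 0 \<le> exp (-\<eta>*(t-x)) * (1 - x)"
      using t by (auto intro!: AE_I2)
    have "(F \<longlongrightarrow> 0) at_bot"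
      unfolding F_def using eta by real_asymp
    then show "((F \<circ> real_of_ereal) \<longlongrightarrow> 0) (at_right (-\<infinity>))"
      by (simp add: ereal_tendsto_simps1)
    have "isCont F t" unfolding F_def using eta by (intro continuous_intros) auto
    then show "((F \<circ> real_of_ereal) \<longlongrightarrow> F t) (at_left (ereal t))"
      by (simp add: ereal_tendsto_simps1 isCont_def filterlim_at_split)
  qed simp
  then show ?thesis by simp
qed

lemma exp_weight_integrable:
  fixes \<eta> t A :: real and g :: "real \<Rightarrow> real"
  assumes eta: "\<eta> > 0" and t: "t \<le> 0" and g: "continuous_on UNIV g"
    and bound: "\<And>s. s \<le> 0 \<Longrightarrow> \<bar>g s\<bar> \<le> A * (1 - s)"
  shows "set_integrable lborel {..<t} (\<lambda>s. exp (-\<eta>*(t-s)) * g s)"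
proof (rule set_integrable_bound[OF set_integrable_mult_right[OF exp_weight_linear_integrable[OF eta t], of A]])
  show "set_borel_measurable lborel {..<t} (\<lambda>s. exp (-\<eta>*(t-s)) * g s)"
    unfolding set_borel_measurable_def measurable_lborel2
    by (rule borel_measurable_continuous_on_indicator)
      (auto intro!: continuous_intros continuous_on_subset[OF g])
  have "norm (exp (-\<eta>*(t-s)) * g s) \<le> norm (A * (exp (-\<eta>*(t-s)) * (1 - s)))" if "s < t" for s
  proof -
    have "norm (exp (-\<eta>*(t-s)) * g s) = exp (-\<eta>*(t-s)) * \<bar>g s\<bar>" by (simp add: abs_mult)
    also have "\<dots> \<le> exp (-\<eta>*(t-s)) * (A * (1 - s))" using bound t that by (intro mult_left_mono) auto
    also have "\<dots> \<le> norm (A * (exp (-\<eta>*(t-s)) * (1 - s)))"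
      by (metis abs_ge_self mult.left_commute real_norm_def)
    finally show ?thesis .
  qed
  then show "AE s in lborel. s \<in> {..<t} \<longrightarrow>
      norm (exp (-\<eta>*(t-s)) * g s) \<le> norm (A * (exp (-\<eta>*(t-s)) * (1 - s)))"
    by (intro AE_I2) auto
qed

lemma exp_weight_tendsto_zero_at_bot:
  fixes \<eta> t A :: real and g :: "real \<Rightarrow> real"
  assumes eta: "\<eta> > 0" and bound: "\<And>s. s \<le> 0 \<Longrightarrow> \<bar>g s\<bar> \<le> A * (1 - s)"
  shows "((\<lambda>s. exp (-\<eta>*(t-s)) * g s) \<longlongrightarrow> 0) at_bot"
proof (rule Lim_null_comparison)
  show "\<forall>\<^sub>F s in at_bot. norm (exp (-\<eta>*(t-s)) * g s) \<le> A * (exp (-\<eta>*(t-s)) * (1 - s))"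
    using eventually_le_at_bot[of 0]
  proof eventually_elim
    case (elim s)
    have "norm (exp (-\<eta>*(t-s)) * g s) = exp (-\<eta>*(t-s)) * \<bar>g s\<bar>" by (simp add: abs_mult)
    also have "\<dots> \<le> exp (-\<eta>*(t-s)) * (A * (1 - s))" using bound[OF elim] by (intro mult_left_mono) auto
    finally show ?case by (simp add: algebra_simps)
  qed
  show "((\<lambda>s. A * (exp (-\<eta>*(t-s)) * (1 - s))) \<longlongrightarrow> 0) at_bot"
    using eta by real_asymp
qed

lemma exp_weight_integral_abs_le:
  fixes \<eta> t e :: real and g :: "real \<Rightarrow> real"
  assumes eta: "\<eta> > 0" and t: "t \<le> 0" and g: "continuous_on UNIV g"
    and bound: "\<And>s. s \<le> 0 \<Longrightarrow> \<bar>g s\<bar> \<le> e * (1 - s)"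
  shows "\<bar>LINT s:{..<t}|lborel. exp (-\<eta>*(t-s)) * g s\<bar>
    \<le> e * (LINT s:{..<t}|lborel. exp (-\<eta>*(t-s)) * (1 - s))"
proof -
  have "\<bar>LINT s:{..<t}|lborel. exp (-\<eta>*(t-s)) * g s\<bar>
      \<le> (LINT s:{..<t}|lborel. norm (exp (-\<eta>*(t-s)) * g s))"
    using set_integral_norm_bound[OF exp_weight_integrable[OF eta t g bound]] by simp
  also have "\<dots> \<le> (LINT s:{..<t}|lborel. e * (exp (-\<eta>*(t-s)) * (1 - s)))"
  proof (rule set_integral_mono)
    show "set_integrable lborel {..<t} (\<lambda>s. norm (exp (-\<eta>*(t-s)) * g s))"
      using exp_weight_integrable[OF eta t g bound] by (rule set_integrable_norm)
    show "set_integrable lborel {..<t} (\<lambda>s. e * (exp (-\<eta>*(t-s)) * (1 - s)))"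
      using exp_weight_linear_integrable[OF eta t] by simp
    show "norm (exp (-\<eta>*(t-s)) * g s) \<le> e * (exp (-\<eta>*(t-s)) * (1 - s))" if "s \<in> {..<t}" for s
      using mult_left_mono[OF bound[of s], of "exp (-\<eta>*(t-s))"] t that
      by (simp add: abs_mult algebra_simps)
  qed
  finally show ?thesis by simp
qed

lemma exp_weight_integral_by_parts:
  fixes \<eta> t A B :: real and z :: "real \<Rightarrow> real"
  assumes eta: "\<eta> > 0" and t: "t \<le> 0" and z: "continuous_on UNIV z"
    and z_bound: "\<And>s. s \<le> 0 \<Longrightarrow> \<bar>z s\<bar> \<le> A * (1 - s)"
    and Z_bound: "\<And>s. s \<le> 0 \<Longrightarrow> \<bar>LBINT r=0..s. z r\<bar> \<le> B * (1 - s)"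
  shows "(LINT s:{..<t}|lborel. exp (-\<eta>*(t-s)) * z s)
     = (LBINT r=0..t. z r) - \<eta> * (LINT s:{..<t}|lborel. exp (-\<eta>*(t-s)) * (LBINT r=0..s. z r))"
proof -
  define Z where "Z u = (LBINT r=0..u. z r)" for u :: real
  define E where "E s = exp (-\<eta>*(t-s))" for s
  have Z_cont: "continuous_on UNIV Z"
    unfolding Z_def by (rule continuous_on_LBINT_0[OF z])
  have Ez_int: "set_integrable lborel {..<t} (\<lambda>s. E s * z s)"
    unfolding E_def by (rule exp_weight_integrable[OF eta t z z_bound])
  have EZ_int: "set_integrable lborel {..<t} (\<lambda>s. \<eta> * (E s * Z s))"
    unfolding E_def Z_def using exp_weight_integrable[OF eta t continuous_on_LBINT_0[OF z] Z_bound]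
    by simp
  have "(LBINT s=-\<infinity>..ereal t. E s * z s + \<eta> * (E s * Z s)) = E t * Z t - 0"
  proof (rule interval_integral_FTC_integrable)
    fix x
    show "((\<lambda>s. E s * Z s) has_vector_derivative E x * z x + \<eta> * (E x * Z x)) (at x)"
      unfolding has_real_derivative_iff_has_vector_derivative[symmetric] E_def Z_def
      by (auto intro!: derivative_eq_intros LBINT_0_has_field_derivative[OF z] simp: algebra_simps)
    show "isCont (\<lambda>s. E s * z s + \<eta> * (E s * Z s)) x"
      unfolding E_def using z Z_cont
      by (auto intro!: continuous_intros simp: continuous_on_eq_continuous_at)
  next
    show "set_integrable lborel (einterval (-\<infinity>) (ereal t)) (\<lambda>s. E s * z s + \<eta> * (E s * Z s))"
      using set_integral_add(1)[OF Ez_int EZ_int] by simp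
    have "((\<lambda>s. E s * Z s) \<longlongrightarrow> 0) at_bot"
      unfolding E_def Z_def by (rule exp_weight_tendsto_zero_at_bot[OF eta Z_bound])
    then show "(((\<lambda>s. E s * Z s) \<circ> real_of_ereal) \<longlongrightarrow> 0) (at_right (-\<infinity>))"
      by (simp add: ereal_tendsto_simps1)
    have "isCont (\<lambda>s. E s * Z s) t"
      unfolding E_def using Z_cont
      by (auto intro!: continuous_intros simp: continuous_on_eq_continuous_at)
    then show "(((\<lambda>s. E s * Z s) \<circ> real_of_ereal) \<longlongrightarrow> E t * Z t) (at_left (ereal t))"
      by (simp add: ereal_tendsto_simps1 isCont_def filterlim_at_split)
  qed simp
  moreover have "(LBINT s=-\<infinity>..ereal t. E s * z s + \<eta> * (E s * Z s))
      = (LINT s:{..<t}|lborel. E s * z s) + \<eta> * (LINT s:{..<t}|lborel. E s * Z s)"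
    by (simp add: interval_lebesgue_integral_le_eq set_integral_add(2)[OF Ez_int EZ_int])
  ultimately show ?thesis
    unfolding E_def Z_def by simp
qed

lemma exp_weight_integral_minus_wiener_exp_int:
  fixes \<eta> t A B C :: real and z w :: "real \<Rightarrow> real"
  assumes eta: "\<eta> > 0" and t: "t \<le> 0"
    and z: "continuous_on UNIV z" and w: "continuous_on UNIV w"
    and z_bound: "\<And>s. s \<le> 0 \<Longrightarrow> \<bar>z s\<bar> \<le> A * (1 - s)"
    and Z_bound: "\<And>s. s \<le> 0 \<Longrightarrow> \<bar>LBINT r=0..s. z r\<bar> \<le> B * (1 - s)"
    and w_bound: "\<And>s. s \<le> 0 \<Longrightarrow> \<bar>w s\<bar> \<le> C * (1 - s)"
  shows "(LINT s:{..t}|lborel. exp (-\<eta>*(t-s)) * z s) - wiener_exp_int \<eta> w t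
     = ((LBINT r=0..t. z r) - w t)
       - \<eta> * (LINT s:{..<t}|lborel. exp (-\<eta>*(t-s)) * ((LBINT r=0..s. z r) - w s))"
proof -
  have EZ_int: "set_integrable lborel {..<t} (\<lambda>s. exp (-\<eta>*(t-s)) * (LBINT r=0..s. z r))"
    by (rule exp_weight_integrable[OF eta t continuous_on_LBINT_0[OF z] Z_bound])
  have Ew_int: "set_integrable lborel {..<t} (\<lambda>s. exp (-\<eta>*(t-s)) * w s)"
    by (rule exp_weight_integrable[OF eta t w w_bound])
  have "(LINT s:{..t}|lborel. exp (-\<eta>*(t-s)) * z s) = (LINT s:{..<t}|lborel. exp (-\<eta>*(t-s)) * z s)"
    using z by (intro set_integral_atMost_eq_lessThan continuous_intros)
  also have "\<dots> = (LBINT r=0..t. z r)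
      - \<eta> * (LINT s:{..<t}|lborel. exp (-\<eta>*(t-s)) * (LBINT r=0..s. z r))"
    by (rule exp_weight_integral_by_parts[OF eta t z z_bound Z_bound])
  finally have z_int: "(LINT s:{..t}|lborel. exp (-\<eta>*(t-s)) * z s) = (LBINT r=0..t. z r)
      - \<eta> * (LINT s:{..<t}|lborel. exp (-\<eta>*(t-s)) * (LBINT r=0..s. z r))" .
  have w_int: "wiener_exp_int \<eta> w t = w t - \<eta> * (LINT s:{..<t}|lborel. exp (-\<eta>*(t-s)) * w s)"
    unfolding wiener_exp_int_def
    using w by (subst set_integral_atMost_eq_lessThan) (auto intro!: continuous_intros)
  have diff_int: "(LINT s:{..<t}|lborel. exp (-\<eta>*(t-s)) * ((LBINT r=0..s. z r) - w s))
      = (LINT s:{..<t}|lborel. exp (-\<eta>*(t-s)) * (LBINT r=0..s. z r))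
        - (LINT s:{..<t}|lborel. exp (-\<eta>*(t-s)) * w s)"
    using set_integral_diff(2)[OF EZ_int Ew_int] by (simp add: algebra_simps)
  show ?thesis
    unfolding z_int w_int diff_int by (simp add: algebra_simps)
qed

lemma eventually_linear_closeness:
  fixes f :: "'a \<Rightarrow> real \<Rightarrow> real" and g :: "real \<Rightarrow> real"
  assumes compact_conv: "\<And>T. T > 0 \<Longrightarrow> uniform_limit {-T..T} f g F"
    and conv_at_bot: "uniform_limit \<Delta> (\<lambda>s \<delta>. (f \<delta> s - g s) / s) (\<lambda>_. 0) at_bot"
    and \<Delta>: "\<forall>\<^sub>F \<delta> in F. \<delta> \<in> \<Delta>" and e: "e > 0"
  shows "\<forall>\<^sub>F \<delta> in F. \<forall>s\<le>0. \<bar>f \<delta> s - g s\<bar> \<le> e * (1 - s)"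
proof -
  obtain T where T: "\<And>s \<delta>. s \<le> T \<Longrightarrow> \<delta> \<in> \<Delta> \<Longrightarrow> \<bar>(f \<delta> s - g s) / s\<bar> < e"
    using conv_at_bot[unfolded uniform_limit_iff, rule_format, OF e]
    unfolding eventually_at_bot_linorder dist_real_def by auto
  define T' where "T' = max (-T) 1"
  have "\<forall>\<^sub>F \<delta> in F. \<forall>s\<in>{-T'..T'}. dist (f \<delta> s) (g s) < e"
    using compact_conv[of T', unfolded uniform_limit_iff, rule_format, OF _ e] by (simp add: T'_def)
  with \<Delta> show ?thesis
  proof eventually_elim
    case (elim \<delta>)
    show ?case
    proof (intro allI impI)
      fix s :: real assume "s \<le> 0"
      show "\<bar>f \<delta> s - g s\<bar> \<le> e * (1 - s)"
      proof (cases "s < -T'")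
        case True
        then have "s \<le> T" "s < 0" by (auto simp: T'_def)
        then have "\<bar>f \<delta> s - g s\<bar> = \<bar>(f \<delta> s - g s) / s\<bar> * \<bar>s\<bar>" by simp
        also have "\<dots> \<le> e * \<bar>s\<bar>"
          using T[OF \<open>s \<le> T\<close> elim(1)] by (intro mult_right_mono) auto
        also have "\<dots> \<le> e * (1 - s)" using \<open>s < 0\<close> e by (intro mult_left_mono) auto
        finally show ?thesis .
      next
        case False
        then have "\<bar>f \<delta> s - g s\<bar> < e" using elim(2) \<open>s \<le> 0\<close> by (auto simp: dist_real_def T'_def)
        also have "\<dots> \<le> e * (1 - s)" using \<open>s \<le> 0\<close> e by simp
        finally show ?thesis by simp
      qed
    qed
  qed
qed

lemma exp_weight_integral_tendsto_wiener_exp_int: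
  fixes z :: "'a \<Rightarrow> real \<Rightarrow> real" and w :: "real \<Rightarrow> real" and \<eta> t :: real
  assumes eta: "\<eta> > 0" and t: "t \<le> 0"
    and w: "continuous_on UNIV w" and w_sublinear: "((\<lambda>s. w s / s) \<longlongrightarrow> 0) at_bot"
    and z: "\<And>\<delta>. \<delta> \<in> \<Delta> \<Longrightarrow> continuous_on UNIV (z \<delta>)"
    and z_bound: "\<And>\<delta>. \<delta> \<in> \<Delta> \<Longrightarrow> \<exists>A. \<forall>s\<le>0. \<bar>z \<delta> s\<bar> \<le> A * (1 - s)"
    and \<Delta>: "\<forall>\<^sub>F \<delta> in F. \<delta> \<in> \<Delta>"
    and compact_conv: "\<And>T. T > 0 \<Longrightarrow> uniform_limit {-T..T} (\<lambda>\<delta> s. LBINT r=0..s. z \<delta> r) w F"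
    and conv_at_bot: "uniform_limit \<Delta> (\<lambda>s \<delta>. ((LBINT r=0..s. z \<delta> r) - w s) / s) (\<lambda>_. 0) at_bot"
  shows "((\<lambda>\<delta>. LINT s:{..t}|lborel. exp (-\<eta>*(t-s)) * z \<delta> s) \<longlongrightarrow> wiener_exp_int \<eta> w t) F"
proof (rule tendstoI)
  fix e :: real assume e: "e > 0"
  define M where "M = (LINT s:{..<t}|lborel. exp (-\<eta>*(t-s)) * (1 - s))"
  define L where "L = 1 - t + \<eta> * M"
  define e' where "e' = e / (2 * L)"
  obtain C where C: "\<And>s. s \<le> 0 \<Longrightarrow> \<bar>w s\<bar> \<le> C * (1 - s)"
    using sublinear_at_bot_imp_linear_bound[OF w w_sublinear] by blast
  have "M \<ge> 0"
    unfolding M_def set_lebesgue_integral_def using t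
    by (auto intro!: integral_nonneg split: split_indicator)
  then have "L > 0" using eta t by (simp add: L_def add_pos_nonneg)
  then have e': "e' > 0" and e'_L: "e' * L < e"
    using e by (simp_all add: e'_def)
  have "\<forall>\<^sub>F \<delta> in F. \<forall>s\<le>0. \<bar>(LBINT r=0..s. z \<delta> r) - w s\<bar> \<le> e' * (1 - s)"
    by (rule eventually_linear_closeness[OF compact_conv conv_at_bot \<Delta> e'])
  with \<Delta> show "\<forall>\<^sub>F \<delta> in F. dist (LINT s:{..t}|lborel. exp (-\<eta>*(t-s)) * z \<delta> s) (wiener_exp_int \<eta> w t) < e"
  proof eventually_elim
    case (elim \<delta>)
    obtain A where A: "\<And>s. s \<le> 0 \<Longrightarrow> \<bar>z \<delta> s\<bar> \<le> A * (1 - s)"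
      using z_bound[OF elim(1)] by blast
    have Z_bound: "\<bar>LBINT r=0..s. z \<delta> r\<bar> \<le> (C + e') * (1 - s)" if "s \<le> 0" for s
      using elim(2) C[OF that] that by (auto simp: algebra_simps abs_le_iff)
    have Z_minus_w: "continuous_on UNIV (\<lambda>s. (LBINT r=0..s. z \<delta> r) - w s)"
      by (intro continuous_on_diff continuous_on_LBINT_0 z elim(1) w)
    have "\<bar>(LINT s:{..t}|lborel. exp (-\<eta>*(t-s)) * z \<delta> s) - wiener_exp_int \<eta> w t\<bar>
        = \<bar>((LBINT r=0..t. z \<delta> r) - w t)
           - \<eta> * (LINT s:{..<t}|lborel. exp (-\<eta>*(t-s)) * ((LBINT r=0..s. z \<delta> r) - w s))\<bar>"
      by (simp only: exp_weight_integral_minus_wiener_exp_int[OF eta t z[OF elim(1)] w A Z_bound C])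
    also have "\<dots> \<le> \<bar>(LBINT r=0..t. z \<delta> r) - w t\<bar>
        + \<eta> * \<bar>LINT s:{..<t}|lborel. exp (-\<eta>*(t-s)) * ((LBINT r=0..s. z \<delta> r) - w s)\<bar>"
      using eta by (intro order_trans[OF abs_triangle_ineq4]) (simp add: abs_mult)
    also have "\<dots> \<le> e' * (1 - t) + \<eta> * (e' * M)"
    proof (intro add_mono mult_left_mono)
      show "\<bar>(LBINT r=0..t. z \<delta> r) - w t\<bar> \<le> e' * (1 - t)"
        using elim(2) t by blast
      show "\<bar>LINT s:{..<t}|lborel. exp (-\<eta>*(t-s)) * ((LBINT r=0..s. z \<delta> r) - w s)\<bar> \<le> e' * M"
        unfolding M_def by (rule exp_weight_integral_abs_le[OF eta t Z_minus_w]) (use elim(2) in blast)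
    qed (use eta in simp)
    also have "\<dots> = e' * L" by (simp add: L_def algebra_simps)
    finally have "\<bar>(LINT s:{..t}|lborel. exp (-\<eta>*(t-s)) * z \<delta> s) - wiener_exp_int \<eta> w t\<bar> \<le> e' * L" .
    then show ?case
      using e'_L by (simp add: dist_real_def)
  qed
qed

lemma L2norm_mult_left: "L2norm D (\<lambda>x. a * f x) = \<bar>a\<bar> * L2norm D f"
  unfolding L2norm_def by (simp add: power_mult_distrib real_sqrt_mult)

lemma tendsto_snd_mult_fst_zero:
  fixes f :: "'a \<Rightarrow> real"
  assumes "(f \<longlongrightarrow> 0) F"
  shows "((\<lambda>p. snd p * f (fst p)) \<longlongrightarrow> 0) (F \<times>\<^sub>F at_right 0)"
  using tendsto_mult[OF filterlim_mono[OF filterlim_snd at_within_le_nhds order_refl]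
      filterlim_compose[OF assms filterlim_fst]]
  by simp

theorem lemma4p5:
  fixes D :: "(real ^ 'n) set"
    and \<phi> :: "real ^ 'n \<Rightarrow> real"
    and \<zeta> :: "real \<Rightarrow> (real \<Rightarrow> real) \<Rightarrow> real"
    and K :: "real \<Rightarrow> real"
    and \<eta> :: real
    and w :: "real \<Rightarrow> real"
  assumes D: "open D" "bounded D"
    and phi: "in_L2 D \<phi>"
    and eta: "\<eta> > 0"
    and w: "w \<in> Omega"
    and zeta_cont: "\<And>\<delta>. \<delta> > 0 \<Longrightarrow> continuous_on UNIV (\<lambda>t. \<zeta> \<delta> (theta t w))"
    and zeta_bound: "\<And>\<delta> t. \<delta> > 0 \<Longrightarrow> \<bar>\<zeta> \<delta> (theta t w)\<bar> \<le> K \<delta> * C_omega w * (\<bar>t\<bar> + 1)"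
    and K_lim: "filterlim K at_top (at_right 0)"
    and zeta_approx: "\<And>T. T > 0 \<Longrightarrow>
          uniform_limit {-T..T} (\<lambda>\<delta> t. (LBINT r=0..t. \<zeta> \<delta> (theta r w))) w (at_right 0)"
    and hyp12: "\<exists>\<delta>t>0.
          uniform_limit {0<..\<delta>t} (\<lambda>t \<delta>. ((LBINT s=0..t. \<zeta> \<delta> (theta s w)) - w t) / t) (\<lambda>_. 0) at_top \<and>
          uniform_limit {0<..\<delta>t} (\<lambda>t \<delta>. ((LBINT s=0..t. \<zeta> \<delta> (theta s w)) - w t) / t) (\<lambda>_. 0) at_bot"
    and t: "t \<le> 0"
  shows "((\<lambda>(\<delta>, \<epsilon>). L2norm D (\<lambda>x. xdelta \<eta> \<phi> \<zeta> \<delta> \<epsilon> w t x - x0 \<eta> \<phi> \<epsilon> w t x))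
            \<longlongrightarrow> 0) (at_right 0 \<times>\<^sub>F at_right 0)
       \<and> ((\<lambda>\<epsilon>. L2norm D (x0 \<eta> \<phi> \<epsilon> w t)) \<longlongrightarrow> 0) (at_right 0)"
proof -
  define I where "I \<delta> = (LINT s:{..t}|lborel. exp (-\<eta>*(t-s)) * \<zeta> \<delta> (theta s w))" for \<delta>
  define c where "c = wiener_exp_int \<eta> w t"
  obtain \<delta>\<^sub>0 where "\<delta>\<^sub>0 > 0" and conv_at_bot:
    "uniform_limit {0<..\<delta>\<^sub>0} (\<lambda>s \<delta>. ((LBINT r=0..s. \<zeta> \<delta> (theta r w)) - w s) / s) (\<lambda>_. 0) at_bot"
    using hyp12 by blast
  have "(I \<longlongrightarrow> c) (at_right 0)"
    unfolding I_def c_def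
  proof (rule exp_weight_integral_tendsto_wiener_exp_int[OF eta t _ _ _ _ _ zeta_approx conv_at_bot])
    show "continuous_on UNIV w" "((\<lambda>s. w s / s) \<longlongrightarrow> 0) at_bot"
      using w by (auto simp: Omega_def)
    show "\<forall>\<^sub>F \<delta> in at_right 0. \<delta> \<in> {0<..\<delta>\<^sub>0}"
      using eventually_at_right[of 0 \<delta>\<^sub>0] \<open>\<delta>\<^sub>0 > 0\<close> by auto
    fix \<delta> :: real assume "\<delta> \<in> {0<..\<delta>\<^sub>0}"
    then show "continuous_on UNIV (\<lambda>s. \<zeta> \<delta> (theta s w))"
      using zeta_cont by simp
    have "\<bar>\<zeta> \<delta> (theta s w)\<bar> \<le> K \<delta> * C_omega w * (1 - s)" if "s \<le> 0" for s
      using zeta_bound[of \<delta> s] \<open>\<delta> \<in> {0<..\<delta>\<^sub>0}\<close> that by simp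
    then show "\<exists>A. \<forall>s\<le>0. \<bar>\<zeta> \<delta> (theta s w)\<bar> \<le> A * (1 - s)" by blast
  qed
  then have "((\<lambda>p. snd p * (I (fst p) - c)) \<longlongrightarrow> 0) (at_right 0 \<times>\<^sub>F at_right 0)"
    by (intro tendsto_snd_mult_fst_zero LIM_zero)
  then have "((\<lambda>p. \<bar>snd p * (I (fst p) - c)\<bar> * L2norm D \<phi>) \<longlongrightarrow> 0) (at_right 0 \<times>\<^sub>F at_right 0)"
    by (intro tendsto_mult_left_zero tendsto_rabs_zero)
  moreover have "(\<lambda>x. xdelta \<eta> \<phi> \<zeta> \<delta> \<epsilon> w t x - x0 \<eta> \<phi> \<epsilon> w t x) = (\<lambda>x. \<epsilon> * (I \<delta> - c) * \<phi> x)"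
    for \<delta> \<epsilon> by (simp add: fun_eq_iff xdelta_def x0_def I_def c_def algebra_simps)
  moreover have "((\<lambda>\<epsilon>. \<bar>\<epsilon> * c\<bar> * L2norm D \<phi>) \<longlongrightarrow> 0) (at_right 0)"
    by (intro tendsto_mult_left_zero tendsto_rabs_zero tendsto_ident_at)
  ultimately show ?thesis
    by (simp add: x0_def c_def L2norm_mult_left case_prod_beta')
qed

end
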